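(* Let $\Gamma<H$ be a cocompact discrete subgroup of the three-dimensional Heisenberg group $H$ with the metric and magnetic form of the context. For each $E>|B|$, the set $\mathrm{Per}^E(\Gamma\backslash H)$ is dense in $S^E(\Gamma\backslash H)$.
   Context: $H$ is the simply connected Lie group whose Lie algebra has basis $X,Y,Z$ with only nonzero bracket $[X,Y]=Z$. Fix $A>0$; $g$ is the left-invariant Riemannian metric with $\{X/\sqrt A,Y/\sqrt A,Z\}$ orthonormal. With $\{\alpha,\beta,\zeta\}$ the dual basis and $B\in\mathbb R$, the magnetic form is $\Omega=d(B\zeta)=-B\alpha\wedge\beta$. A magnetic geodesic is a curve $\sigma$ with $\nabla_{\sigma'}\sigma'=F\sigma'$, where $\nabla$ is the Levi-Civita connection and $F$ is defined by $g(Fu,v)=\Omega(u,v)$; magnetic geodesics have constant speed (energy). $\Gamma\backslash H$ carries the induced metric and magnetic form. For a Riemannian manifold $M$ with magnetic form, $S^EM=\{V\in TM:|V|=E\}$, $\sigma_V$ is the magnetic geodesic with $\sigma_V'(0)=V$, and $\mathrm{Per}^E(M)=\{V\in S^EM:\sigma_V\text{ is periodic}\}$. *)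

theory Defs
  imports "HOL-Analysis.Analysis"
begin

text \<open>Model of the Heisenberg group H: R^3 with the product
  (x,y,z)(x',y',z') = (x+x', y+y', z+z'+x y').  Identity 0.
  Its left-invariant vector fields are X = d/dx, Y = d/dy + x d/dz, Z = d/dz,
  which satisfy [X,Y] = Z with all other brackets zero; at the identity
  they are the standard basis vectors.\<close>

definition hmul :: "real^3 \<Rightarrow> real^3 \<Rightarrow> real^3" where
  "hmul p q = vector [p$1 + q$1, p$2 + q$2, p$3 + q$3 + p$1 * q$2]"

definition hinv :: "real^3 \<Rightarrow> real^3" where
  "hinv p = vector [- p$1, - p$2, - p$3 + p$1 * p$2]"

text \<open>Dual coframe alpha, beta, zeta of X, Y, Z, evaluated at a point p on a
  tangent vector u (tangent vectors written in the coordinates of R^3).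
  Equivalently, (alpha u, beta u, zeta u) is the left-trivialisation
  dL_{p^{-1}} u expressed in the basis X, Y, Z.\<close>

definition h_alpha :: "real^3 \<Rightarrow> real^3 \<Rightarrow> real" where
  "h_alpha p u = u$1"

definition h_beta :: "real^3 \<Rightarrow> real^3 \<Rightarrow> real" where
  "h_beta p u = u$2"

definition h_zeta :: "real^3 \<Rightarrow> real^3 \<Rightarrow> real" where
  "h_zeta p u = u$3 - p$1 * u$2"

text \<open>Left-invariant metric with {X/sqrt A, Y/sqrt A, Z} orthonormal.\<close>

definition gmetric :: "real \<Rightarrow> real^3 \<Rightarrow> real^3 \<Rightarrow> real^3 \<Rightarrow> real" where
  "gmetric A p u v =
     A * h_alpha p u * h_alpha p v + A * h_beta p u * h_beta p v + h_zeta p u * h_zeta p v"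

text \<open>Magnetic 2-form Omega = d(B zeta) = - B alpha \<and> beta.\<close>

definition mag_form :: "real \<Rightarrow> real^3 \<Rightarrow> real^3 \<Rightarrow> real^3 \<Rightarrow> real" where
  "mag_form B p u v = - B * (h_alpha p u * h_beta p v - h_alpha p v * h_beta p u)"

definition gcoef :: "real \<Rightarrow> real^3 \<Rightarrow> 3 \<Rightarrow> 3 \<Rightarrow> real" where
  "gcoef A p i j = gmetric A p (axis i 1) (axis j 1)"

definition dgcoef :: "real \<Rightarrow> real^3 \<Rightarrow> 3 \<Rightarrow> 3 \<Rightarrow> 3 \<Rightarrow> real" where
  "dgcoef A p k i j = deriv (\<lambda>t. gcoef A (p + t *\<^sub>R axis k 1) i j) 0"

definition christoffel1 :: "real \<Rightarrow> real^3 \<Rightarrow> 3 \<Rightarrow> 3 \<Rightarrow> 3 \<Rightarrow> real" where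
  "christoffel1 A p l i j = (dgcoef A p i j l + dgcoef A p j i l - dgcoef A p l i j) / 2"

text \<open>Magnetic geodesic (defined for all times): twice differentiable curve with
  nabla_{s'} s' = F s', written in coordinates as
  g(nabla_{s'} s', e_l) = Omega(s', e_l) for every coordinate vector e_l
  (this is g(F s', e_l) by definition of F).\<close>

definition magnetic_geodesic :: "real \<Rightarrow> real \<Rightarrow> (real \<Rightarrow> real^3) \<Rightarrow> bool" where
  "magnetic_geodesic A B \<sigma> \<longleftrightarrow>
     (\<forall>t. \<sigma> differentiable (at t)) \<and>
     (\<forall>t. (\<lambda>s. vector_derivative \<sigma> (at s)) differentiable (at t)) \<and>
     (\<forall>t l. let v = vector_derivative \<sigma> (at t);
                a = vector_derivative (\<lambda>s. vector_derivative \<sigma> (at s)) (at t) in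
          (\<Sum>k\<in>UNIV. gcoef A (\<sigma> t) l k * a$k)
          + (\<Sum>i\<in>UNIV. \<Sum>j\<in>UNIV. christoffel1 A (\<sigma> t) l i j * v$i * v$j)
          = mag_form B (\<sigma> t) v (axis l 1))"

definition cocompact_discrete_subgroup :: "(real^3) set \<Rightarrow> bool" where
  "cocompact_discrete_subgroup \<Gamma> \<longleftrightarrow>
     0 \<in> \<Gamma> \<and> (\<forall>g\<in>\<Gamma>. \<forall>h\<in>\<Gamma>. hmul g h \<in> \<Gamma>) \<and> (\<forall>g\<in>\<Gamma>. hinv g \<in> \<Gamma>) \<and>
     (\<forall>g\<in>\<Gamma>. \<exists>e>0. \<forall>h\<in>\<Gamma>. dist h g < e \<longrightarrow> h = g) \<and>
     (\<exists>K. compact K \<and> (\<forall>p. \<exists>g\<in>\<Gamma>. \<exists>k\<in>K. p = hmul g k))"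

definition quotient_periodic :: "(real^3) set \<Rightarrow> (real \<Rightarrow> real^3) \<Rightarrow> bool" where
  "quotient_periodic \<Gamma> \<sigma> \<longleftrightarrow>
     (\<exists>T>0. \<forall>t. \<exists>g\<in>\<Gamma>. \<sigma> (t + T) = hmul g (\<sigma> t))"

text \<open>Energy-E sphere bundle of H (TH = H x R^3 in coordinates).\<close>

definition sphere_bundle :: "real \<Rightarrow> real \<Rightarrow> ((real^3) \<times> (real^3)) set" where
  "sphere_bundle A E = {(p, v). sqrt (gmetric A p v v) = E}"

text \<open>Preimage in S^E H of Per^E(Gamma\H).\<close>

definition per_lift :: "real \<Rightarrow> real \<Rightarrow> (real^3) set \<Rightarrow> real \<Rightarrow> ((real^3) \<times> (real^3)) set" where
  "per_lift A B \<Gamma> E = {(p, v) \<in> sphere_bundle A E. \<exists>\<sigma>. magnetic_geodesic A B \<sigma> \<and>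
      \<sigma> 0 = p \<and> vector_derivative \<sigma> (at 0) = v \<and> quotient_periodic \<Gamma> \<sigma>}"

end

theory Submission
  imports Defs
begin

(* For u \<noteq> B, the helix whose left-trivialised velocity has constant vertical component u
  and horizontal part of constant length rotating with angular speed c = (u - B) / A is a
  magnetic geodesic; after each revolution it has been left-translated by a central element
  (0, 0, D(u)).  A lattice contains a nonzero central element (0, 0, g), namely a commutator:
  if all commutators were trivial, the horizontal parts of the lattice would lie on a line,
  which contradicts cocompactness.  Hence the helix closes up in the quotient as soon as
  D(u) / g is rational.  On either side of B the drift D is continuous and injective, so by the
  intermediate value theorem such u exist arbitrarily close to any vertical velocity in [-E, E];
  keeping the base point and the horizontal direction fixed, the corresponding initial vectors
  approximate every vector of S^E H. *)

lemma vector3_eq_axis: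
  "(vector [a, b, c] :: real^3) = a *\<^sub>R axis 1 1 + b *\<^sub>R axis 2 1 + c *\<^sub>R axis 3 1"
  by (simp add: vec_eq_iff forall_3 axis_def)

lemma has_vector_derivative_vector3:
  assumes "(f1 has_real_derivative d1) (at t)" "(f2 has_real_derivative d2) (at t)"
    "(f3 has_real_derivative d3) (at t)"
  shows "((\<lambda>s. vector [f1 s, f2 s, f3 s] :: real^3) has_vector_derivative vector [d1, d2, d3]) (at t)"
proof -
  have scaled: "((\<lambda>s. f s *\<^sub>R c) has_vector_derivative d *\<^sub>R c) (at t)"
    if "(f has_real_derivative d) (at t)" for f d and c :: "real^3"
    using has_vector_derivative_scaleR[OF that has_vector_derivative_const[of c]] by simp
  show ?thesis
    unfolding vector3_eq_axis by (intro has_vector_derivative_add scaled assms)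
qed

(* The tangent vector a X + b Y + w Z at q. *)
definition frame_vec :: "real^3 \<Rightarrow> real \<Rightarrow> real \<Rightarrow> real \<Rightarrow> real^3" where
  "frame_vec q a b w = vector [a, b, w + q$1 * b]"

lemma frame_vec_coframe [simp]:
  "h_alpha q (frame_vec q a b w) = a" "h_beta q (frame_vec q a b w) = b"
  "h_zeta q (frame_vec q a b w) = w"
  by (simp_all add: frame_vec_def h_alpha_def h_beta_def h_zeta_def)

lemma frame_vec_of_coframe: "frame_vec q (h_alpha q v) (h_beta q v) (h_zeta q v) = v"
  by (simp add: frame_vec_def h_alpha_def h_beta_def h_zeta_def vec_eq_iff forall_3)

lemma gmetric_frame_vec:
  "gmetric A q (frame_vec q a b w) (frame_vec q a b w) = A * a\<^sup>2 + A * b\<^sup>2 + w\<^sup>2"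
  by (simp add: gmetric_def power2_eq_square)

definition central :: "real \<Rightarrow> real^3" where
  "central a = vector [0, 0, a]"

lemma central_0: "central 0 = 0"
  by (simp add: central_def vec_eq_iff forall_3)

lemma hmul_central: "hmul (central a) (central b) = central (a + b)"
  by (simp add: hmul_def central_def vec_eq_iff forall_3)

lemma hinv_central: "hinv (central a) = central (- a)"
  by (simp add: hinv_def central_def vec_eq_iff forall_3)

lemma commutator_eq_central:
  "hmul (hmul g h) (hmul (hinv g) (hinv h)) = central (g$1 * h$2 - g$2 * h$1)"
  by (simp add: hmul_def hinv_def central_def vec_eq_iff forall_3 algebra_simps)

lemma central_int_multiple_mem:
  assumes \<Gamma>: "cocompact_discrete_subgroup \<Gamma>" and a: "central a \<in> \<Gamma>"
  shows "central (of_int m * a) \<in> \<Gamma>"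
proof -
  have nat_multiple: "central (of_nat k * a) \<in> \<Gamma>" for k
  proof (induction k)
    case 0
    then show ?case
      using \<Gamma> by (simp add: central_0 cocompact_discrete_subgroup_def)
  next
    case (Suc k)
    then have "hmul (central (of_nat k * a)) (central a) \<in> \<Gamma>"
      using \<Gamma> a by (simp add: cocompact_discrete_subgroup_def)
    then show ?case
      by (simp add: hmul_central algebra_simps)
  qed
  show ?thesis
  proof (cases "m \<ge> 0")
    case True
    then show ?thesis
      using nat_multiple[of "nat m"] by simp
  next
    case False
    have "hinv (central (of_nat (nat (- m)) * a)) \<in> \<Gamma>"
      using \<Gamma> nat_multiple unfolding cocompact_discrete_subgroup_def by blast
    then show ?thesis
      using False by (simp add: hinv_central)
  qed
qed

lemma cocompact_horizontal_transversal:
  assumes "compact K" and cover: "\<forall>p. \<exists>g\<in>\<Gamma>. \<exists>k\<in>K. p = hmul g k" and u: "u1 \<noteq> 0 \<or> u2 \<noteq> 0"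
  shows "\<exists>g\<in>\<Gamma>. g$1 * u2 - g$2 * u1 \<noteq> 0"
proof (rule ccontr)
  assume "\<not> ?thesis"
  then have on_line: "g$1 * u2 - g$2 * u1 = 0" if "g \<in> \<Gamma>" for g
    using that by blast
  (* delta is additive under hmul, so if it vanished on Gamma it would be bounded everywhere. *)
  define \<delta> where "\<delta> p = p$1 * u2 - p$2 * u1" for p :: "real^3"
  have "bounded (\<delta> ` K)"
    unfolding \<delta>_def by (intro compact_imp_bounded compact_continuous_image continuous_intros \<open>compact K\<close>)
  then obtain M where M: "\<And>k. k \<in> K \<Longrightarrow> \<delta> k \<le> M"
    unfolding bounded_iff by (metis abs_le_D1 image_eqI real_norm_def)
  have pos: "u1\<^sup>2 + u2\<^sup>2 > 0"
    using u by (simp add: sum_power2_gt_zero_iff)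
  define t where "t = (\<bar>M\<bar> + 1) / (u1\<^sup>2 + u2\<^sup>2)"
  obtain g k where gk: "g \<in> \<Gamma>" "k \<in> K" "vector [t * u2, - t * u1, 0] = hmul g k"
    using cover by blast
  have "\<bar>M\<bar> + 1 = t * (u1\<^sup>2 + u2\<^sup>2)"
    using pos by (auto simp: t_def)
  also have "\<dots> = \<delta> (vector [t * u2, - t * u1, 0])"
    by (simp add: \<delta>_def power2_eq_square algebra_simps)
  also have "\<dots> = \<delta> g + \<delta> k"
    unfolding gk(3) by (simp add: \<delta>_def hmul_def algebra_simps)
  finally show False
    using on_line[OF gk(1)] M[OF gk(2)] unfolding \<delta>_def by linarith
qed

lemma cocompact_discrete_subgroup_nonzero_central:
  assumes \<Gamma>: "cocompact_discrete_subgroup \<Gamma>"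
  obtains a where "a \<noteq> 0" "central a \<in> \<Gamma>"
proof -
  obtain K where K: "compact K" "\<forall>p. \<exists>g\<in>\<Gamma>. \<exists>k\<in>K. p = hmul g k"
    using \<Gamma> unfolding cocompact_discrete_subgroup_def by blast
  obtain g where g: "g \<in> \<Gamma>" "g$2 \<noteq> 0"
    using cocompact_horizontal_transversal[OF K, of 1 0] by auto
  obtain h where h: "h \<in> \<Gamma>" "h$1 * g$2 - h$2 * g$1 \<noteq> 0"
    using cocompact_horizontal_transversal[OF K, of "g$1" "g$2"] g(2) by blast
  have "hmul (hmul h g) (hmul (hinv h) (hinv g)) \<in> \<Gamma>"
    using \<Gamma> g(1) h(1) unfolding cocompact_discrete_subgroup_def by blast
  then show ?thesis
    using that h(2) unfolding commutator_eq_central by blast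
qed

definition kron :: "3 \<Rightarrow> 3 \<Rightarrow> real" where
  "kron i j = (if i = j then 1 else 0)"

lemma gcoef_eq:
  "gcoef A q i j = A * kron i 1 * kron j 1 + A * kron i 2 * kron j 2
     + (kron i 3 - q$1 * kron i 2) * (kron j 3 - q$1 * kron j 2)"
  by (simp add: gcoef_def gmetric_def h_alpha_def h_beta_def h_zeta_def axis_def kron_def)

lemma dgcoef_eq:
  "dgcoef A p k i j = kron k 1 * (2 * p$1 * kron i 2 * kron j 2 - (kron i 3 * kron j 2 + kron i 2 * kron j 3))"
proof -
  have "((\<lambda>t. gcoef A (p + t *\<^sub>R axis k 1) i j) has_real_derivative
      kron k 1 * (2 * p$1 * kron i 2 * kron j 2 - (kron i 3 * kron j 2 + kron i 2 * kron j 3))) (at 0)"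
    unfolding gcoef_eq by (auto intro!: derivative_eq_intros simp: axis_def kron_def algebra_simps)
  then show ?thesis
    unfolding dgcoef_def by (rule DERIV_imp_deriv)
qed

(* The curve through p whose velocity has coframe components
  (r cos (c t + ph), r sin (c t + ph), w), obtained by integrating these components. *)
definition helix :: "real^3 \<Rightarrow> real \<Rightarrow> real \<Rightarrow> real \<Rightarrow> real \<Rightarrow> real \<Rightarrow> real^3" where
  "helix p r ph c w t = vector
     [p$1 + r / c * (sin (c * t + ph) - sin ph),
      p$2 - r / c * (cos (c * t + ph) - cos ph),
      p$3 + w * t - p$1 * r / c * (cos (c * t + ph) - cos ph)
        + r\<^sup>2 / (2 * c) * (t - (sin (c * t + ph) * cos (c * t + ph) - sin ph * cos ph) / c)
        + r\<^sup>2 / c\<^sup>2 * sin ph * (cos (c * t + ph) - cos ph)]"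

lemma helix_0 [simp]: "helix p r ph c w 0 = p"
  by (simp add: helix_def vec_eq_iff forall_3)

lemma helix_has_vector_derivative:
  assumes "c \<noteq> 0"
  shows "(helix p r ph c w has_vector_derivative
      frame_vec (helix p r ph c w t) (r * cos (c * t + ph)) (r * sin (c * t + ph)) w) (at t)"
proof -
  have pyth: "cos x * cos x = 1 - sin x * sin x" for x :: real
    using sin_cos_squared_add[of x] by (simp add: power2_eq_square)
  show ?thesis
    unfolding helix_def frame_vec_def using assms
    by (intro has_vector_derivative_vector3) (auto intro!: derivative_eq_intros
        simp: pyth diff_divide_distrib add_divide_distrib power2_eq_square algebra_simps)
qed

lemma helix_velocity_has_vector_derivative:
  assumes "c \<noteq> 0"
  shows "((\<lambda>s. frame_vec (helix p r ph c w s) (r * cos (c * s + ph)) (r * sin (c * s + ph)) w)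
      has_vector_derivative
        vector [- r * c * sin (c * t + ph), r * c * cos (c * t + ph),
          r\<^sup>2 * cos (c * t + ph) * sin (c * t + ph) + helix p r ph c w t $ 1 * r * c * cos (c * t + ph)])
      (at t)"
  unfolding helix_def frame_vec_def using assms
  by (intro has_vector_derivative_vector3)
    (auto intro!: derivative_eq_intros simp: power2_eq_square algebra_simps)

lemma helix_magnetic_geodesic:
  assumes "w = B + A * c" and "c \<noteq> 0"
  shows "magnetic_geodesic A B (helix p r ph c w)"
proof -
  let ?\<sigma> = "helix p r ph c w"
  define vel where "vel s = frame_vec (?\<sigma> s) (r * cos (c * s + ph)) (r * sin (c * s + ph)) w" for s
  define acc where "acc t = (vector [- r * c * sin (c * t + ph), r * c * cos (c * t + ph),
    r\<^sup>2 * cos (c * t + ph) * sin (c * t + ph) + ?\<sigma> t $ 1 * r * c * cos (c * t + ph)] :: real^3)" for t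
  have vel: "(?\<sigma> has_vector_derivative vel t) (at t)" for t
    unfolding vel_def using assms(2) by (rule helix_has_vector_derivative)
  have acc: "(vel has_vector_derivative acc t) (at t)" for t
    unfolding vel_def acc_def using assms(2) by (rule helix_velocity_has_vector_derivative)
  have vd_\<sigma>: "vector_derivative ?\<sigma> (at t) = vel t" and vd_vel: "vector_derivative vel (at t) = acc t" for t
    using vel acc by (simp_all add: vector_derivative_at)
  have equation: "(\<Sum>k\<in>UNIV. gcoef A (?\<sigma> t) l k * acc t $ k)
      + (\<Sum>i\<in>UNIV. \<Sum>j\<in>UNIV. christoffel1 A (?\<sigma> t) l i j * vel t $ i * vel t $ j)
      = mag_form B (?\<sigma> t) (vel t) (axis l 1)" for t l
    using exhaust_3[of l]
    by (auto simp: sum_3 gcoef_eq christoffel1_def dgcoef_eq kron_def mag_form_def h_alpha_def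
        h_beta_def axis_def vel_def acc_def frame_vec_def assms(1) power2_eq_square algebra_simps)
  show ?thesis
    unfolding magnetic_geodesic_def Let_def vd_\<sigma> vd_vel
    using vel acc equation by (auto intro: differentiableI_vector)
qed

lemma helix_add_period:
  assumes "c \<noteq> 0" and "c * T = 2 * pi * of_int n"
  shows "helix p r ph c w (t + T) = hmul (central (T * (w + r\<^sup>2 / (2 * c)))) (helix p r ph c w t)"
proof -
  have angle: "c * (t + T) + ph = (c * t + ph) + 2 * pi * of_int n"
    using assms(2) by (simp add: algebra_simps)
  have "sin (c * (t + T) + ph) = sin (c * t + ph)" "cos (c * (t + T) + ph) = cos (c * t + ph)"
    unfolding angle by (simp_all add: sin_add cos_add)
  then show ?thesis
    using assms(1) by (simp add: helix_def hmul_def central_def vec_eq_iff forall_3 field_simps)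
qed

(* D(u): by helix_add_period, the helix with c = (u - B) / A and
  r\<^sup>2 = (E\<^sup>2 - u\<^sup>2) / A is translated by central (T * (u + r\<^sup>2 / (2 * c))) after one
  revolution T = 2 * pi / |c|. *)
definition period_drift :: "real \<Rightarrow> real \<Rightarrow> real \<Rightarrow> real \<Rightarrow> real" where
  "period_drift A B E u = 2 * pi / \<bar>(u - B) / A\<bar> * (u + (E\<^sup>2 - u\<^sup>2) / A / (2 * ((u - B) / A)))"

lemma period_drift_eq:
  assumes "A > 0" and "u \<noteq> B"
  shows "period_drift A B E u = sgn (u - B) * pi * A * (1 + (E\<^sup>2 - B\<^sup>2) / (u - B)\<^sup>2)"
proof -
  have sign: "2 * pi * A / \<bar>s\<bar> * ((s\<^sup>2 + D) / (2 * s)) = sgn s * pi * A * (1 + D / s\<^sup>2)"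
    if "s \<noteq> 0" for s D :: real
    using that by (cases "s > 0") (simp_all add: field_simps power2_eq_square)
  have "period_drift A B E u = 2 * pi * A / \<bar>u - B\<bar> * (((u - B)\<^sup>2 + (E\<^sup>2 - B\<^sup>2)) / (2 * (u - B)))"
    using assms by (simp add: period_drift_def field_simps power2_eq_square)
  also have "\<dots> = sgn (u - B) * pi * A * (1 + (E\<^sup>2 - B\<^sup>2) / (u - B)\<^sup>2)"
    using assms(2) by (intro sign) simp
  finally show ?thesis .
qed

lemma period_drift_neq:
  assumes "A > 0" and "\<bar>B\<bar> < E" and "w1 < w2" and "B < w1 \<or> w2 < B"
  shows "period_drift A B E w1 \<noteq> period_drift A B E w2"
proof -
  have "B\<^sup>2 < E\<^sup>2"
    using power_strict_mono[of "\<bar>B\<bar>" E 2] assms(2) by simp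
  moreover have "(w1 - B)\<^sup>2 \<noteq> (w2 - B)\<^sup>2" "(w1 - B)\<^sup>2 > 0" "(w2 - B)\<^sup>2 > 0"
    using assms(3,4) by (auto simp: power2_eq_iff)
  moreover have "sgn (w1 - B) = sgn (w2 - B)" "sgn (w1 - B) \<noteq> 0"
    using assms(3,4) by (auto simp: sgn_if)
  ultimately show ?thesis
    using assms(1,3,4) by (auto simp: period_drift_eq)
qed

lemma exists_rational_period_drift:
  assumes "A > 0" and "\<bar>B\<bar> < E" and "w1 < w2" and "B < w1 \<or> w2 < B" and "g \<noteq> 0"
  obtains u where "u \<in> {w1..w2}" "period_drift A B E u / g \<in> \<rat>"
proof -
  define f where "f u = period_drift A B E u / g" for u
  have "continuous_on {w1..w2} f"
    unfolding f_def period_drift_def using assms(1,4,5)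
    by (intro continuous_intros) auto
  moreover have "f w1 \<noteq> f w2"
    using period_drift_neq[OF assms(1-4)] assms(5) by (simp add: f_def)
  then have "min (f w1) (f w2) < max (f w1) (f w2)"
    by linarith
  then obtain q where "q \<in> \<rat>" "min (f w1) (f w2) < q" "q < max (f w1) (f w2)"
    using Rats_dense_in_real by blast
  moreover from this have "q \<in> closed_segment (f w1) (f w2)"
    by (auto simp: closed_segment_eq_real_ivl min_def max_def split: if_splits)
  ultimately show ?thesis
    using IVT'_closed_segment_real[of q f w1 w2] assms(3) that
    unfolding f_def by (auto simp: closed_segment_eq_real_ivl)
qed

definition horizontal_speed :: "real \<Rightarrow> real \<Rightarrow> real \<Rightarrow> real" where
  "horizontal_speed A E u = sqrt ((E\<^sup>2 - u\<^sup>2) / A)"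

lemma horizontal_speed_sq:
  assumes "A > 0" and "\<bar>u\<bar> \<le> E"
  shows "(horizontal_speed A E u)\<^sup>2 = (E\<^sup>2 - u\<^sup>2) / A"
proof -
  have "u\<^sup>2 \<le> E\<^sup>2"
    using power_mono[OF assms(2) abs_ge_zero, of 2] by simp
  then show ?thesis
    using assms(1) by (simp add: horizontal_speed_def)
qed

lemma frame_vec_in_sphere_bundle:
  assumes "A > 0" and "\<bar>u\<bar> \<le> E"
  shows "(p, frame_vec p (horizontal_speed A E u * cos ph) (horizontal_speed A E u * sin ph) u)
    \<in> sphere_bundle A E"
proof -
  have "gmetric A p (frame_vec p (horizontal_speed A E u * cos ph) (horizontal_speed A E u * sin ph) u)
      (frame_vec p (horizontal_speed A E u * cos ph) (horizontal_speed A E u * sin ph) u)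
    = A * (horizontal_speed A E u)\<^sup>2 * ((sin ph)\<^sup>2 + (cos ph)\<^sup>2) + u\<^sup>2"
    unfolding gmetric_frame_vec by algebra
  also have "\<dots> = E\<^sup>2"
    using assms by (simp add: horizontal_speed_sq)
  finally show ?thesis
    using assms(2) by (simp add: sphere_bundle_def)
qed

lemma helix_frame_vec_in_per_lift:
  assumes "A > 0" and \<Gamma>: "cocompact_discrete_subgroup \<Gamma>" and g: "central g \<in> \<Gamma>" "g \<noteq> 0"
    and u: "u \<noteq> B" "\<bar>u\<bar> \<le> E" and rational: "period_drift A B E u / g \<in> \<rat>"
  shows "(p, frame_vec p (horizontal_speed A E u * cos ph) (horizontal_speed A E u * sin ph) u)
    \<in> per_lift A B \<Gamma> E"
proof -
  define c where "c = (u - B) / A"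
  define r where "r = horizontal_speed A E u"
  let ?\<sigma> = "helix p r ph c u"
  have c: "c \<noteq> 0" "u = B + A * c"
    using assms(1) u(1) by (simp_all add: c_def)
  obtain m k where k: "k > 0" and mk: "period_drift A B E u / g = of_int m / of_int k"
    using Rats_cases'[OF rational] by metis
  define T where "T = 2 * pi * of_int k / \<bar>c\<bar>"
  have "T > 0"
    unfolding T_def using k c(1) by simp
  have cT: "c * T = 2 * pi * of_int (if c > 0 then k else - k)"
    unfolding T_def using c(1) by (simp add: abs_if)
  have "T * (u + r\<^sup>2 / (2 * c)) = of_int k * period_drift A B E u"
    unfolding T_def period_drift_def r_def c_def
    using assms(1) u by (simp add: horizontal_speed_sq)
  also have "\<dots> = of_int m * g"
    using mk k g(2) by (simp add: field_simps)
  finally have "helix p r ph c u (t + T) = hmul (central (of_int m * g)) (?\<sigma> t)" for t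
    using helix_add_period[OF c(1) cT] by simp
  then have "quotient_periodic \<Gamma> ?\<sigma>"
    unfolding quotient_periodic_def using \<open>T > 0\<close> central_int_multiple_mem[OF \<Gamma> g(1)] by blast
  moreover have "vector_derivative ?\<sigma> (at 0) = frame_vec p (r * cos ph) (r * sin ph) u"
    using helix_has_vector_derivative[OF c(1), of p r ph u 0] by (simp add: vector_derivative_at)
  ultimately show ?thesis
    using helix_magnetic_geodesic[OF c(2,1)] frame_vec_in_sphere_bundle[OF assms(1) u(2)]
    unfolding per_lift_def r_def by (auto intro!: exI[of _ "helix p (horizontal_speed A E u) ph c u"])
qed

lemma sphere_bundle_polar:
  assumes "A > 0" and "(p, v) \<in> sphere_bundle A E"
  obtains w ph where "\<bar>w\<bar> \<le> E"
    "v = frame_vec p (horizontal_speed A E w * cos ph) (horizontal_speed A E w * sin ph) w"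
proof -
  define z where "z = Complex (h_alpha p v) (h_beta p v)"
  define w where "w = h_zeta p v"
  have "sqrt (gmetric A p v v) = E"
    using assms(2) by (simp add: sphere_bundle_def)
  moreover have v: "v = frame_vec p (Re z) (Im z) w"
    unfolding z_def w_def by (simp add: frame_vec_of_coframe)
  moreover have "gmetric A p v v = A * (cmod z)\<^sup>2 + w\<^sup>2"
    by (subst (1 2) v) (simp add: gmetric_frame_vec cmod_power2 algebra_simps)
  ultimately have E: "E\<^sup>2 = A * (cmod z)\<^sup>2 + w\<^sup>2" "E \<ge> 0"
    using assms(1) by auto
  then have "\<bar>w\<bar> \<le> E"
    using assms(1) abs_le_square_iff[of w E] by simp
  moreover have "horizontal_speed A E w = cmod z"
    using E assms(1) by (simp add: horizontal_speed_def real_sqrt_unique)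
  ultimately show ?thesis
    using that[of w "Arg2pi z"] v by (simp add: cos_Arg2pi sin_Arg2pi)
qed

lemma exists_interval_near_avoiding:
  fixes B E w d :: real
  assumes "\<bar>B\<bar> < E" and "\<bar>w\<bar> \<le> E" and "d > 0"
  obtains w1 w2 where "w1 < w2" "B < w1 \<or> w2 < B" "{w1..w2} \<subseteq> {w - d<..<w + d} \<inter> {-E..E}"
proof -
  define h where "h = min (d / 2) (if w = B then E - B else \<bar>w - B\<bar> / 2)"
  have h: "0 < h" "h \<le> d / 2" "w \<noteq> B \<Longrightarrow> h \<le> \<bar>w - B\<bar> / 2" "w = B \<Longrightarrow> h \<le> E - B"
    using assms unfolding h_def by (auto simp: min_def)
  consider "B < w" | "w < B" | "w = B"
    by linarith
  then show ?thesis
  proof cases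
    case 1
    then show ?thesis
      using that[of "w - h" w] assms h by (auto simp: subset_eq abs_le_iff abs_less_iff)
  next
    case 2
    then show ?thesis
      using that[of w "w + h"] assms h by (auto simp: subset_eq abs_le_iff abs_less_iff)
  next
    case 3
    then show ?thesis
      using that[of "B + h / 2" "B + h"] assms h by (auto simp: subset_eq abs_le_iff abs_less_iff)
  qed
qed

lemma frame_vec_in_closure_per_lift:
  assumes "A > 0" and \<Gamma>: "cocompact_discrete_subgroup \<Gamma>" and "\<bar>B\<bar> < E" and w: "\<bar>w\<bar> \<le> E"
  shows "(p, frame_vec p (horizontal_speed A E w * cos ph) (horizontal_speed A E w * sin ph) w)
    \<in> closure (per_lift A B \<Gamma> E)"
proof -
  define V where "V u = frame_vec p (horizontal_speed A E u * cos ph) (horizontal_speed A E u * sin ph) u" for u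
  obtain g where g: "g \<noteq> 0" "central g \<in> \<Gamma>"
    using cocompact_discrete_subgroup_nonzero_central[OF \<Gamma>] by blast
  have "\<exists>x\<in>per_lift A B \<Gamma> E. dist x (p, V w) < e" if "e > 0" for e
  proof -
    have "isCont V w"
      unfolding V_def frame_vec_def horizontal_speed_def vector3_eq_axis
      using assms(1) by (intro continuous_intros) auto
    then obtain d where "d > 0" and d: "\<And>u. \<bar>u - w\<bar> < d \<Longrightarrow> dist (V u) (V w) < e"
      using \<open>e > 0\<close> unfolding continuous_at_eps_delta dist_real_def by blast
    obtain w1 w2 where ww: "w1 < w2" "B < w1 \<or> w2 < B" "{w1..w2} \<subseteq> {w - d<..<w + d} \<inter> {-E..E}"
      using exists_interval_near_avoiding[OF assms(3) w \<open>d > 0\<close>] by blast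
    obtain u where u: "u \<in> {w1..w2}" "period_drift A B E u / g \<in> \<rat>"
      using exists_rational_period_drift[OF assms(1,3) ww(1,2) g(1)] by blast
    with ww(3) have "u \<in> {w - d<..<w + d} \<inter> {-E..E}"
      by blast
    then have "\<bar>u - w\<bar> < d" "\<bar>u\<bar> \<le> E"
      by auto
    have "(p, V u) \<in> per_lift A B \<Gamma> E"
      unfolding V_def using \<open>\<bar>u\<bar> \<le> E\<close> u ww(1,2)
      by (intro helix_frame_vec_in_per_lift[OF assms(1) \<Gamma> g(2,1)]) auto
    moreover have "dist (p, V u) (p, V w) < e"
      using d[OF \<open>\<bar>u - w\<bar> < d\<close>] by (simp add: dist_Pair_Pair)
    ultimately show ?thesis
      by blast
  qed
  then show ?thesis
    unfolding closure_approachable V_def by blast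
qed

theorem theorem4p17:
  fixes A B E :: real and \<Gamma> :: "(real^3) set"
  assumes "A > 0"
    and "cocompact_discrete_subgroup \<Gamma>"
    and "E > \<bar>B\<bar>"
  shows "sphere_bundle A E \<subseteq> closure (per_lift A B \<Gamma> E)"
proof
  fix pv assume "pv \<in> sphere_bundle A E"
  then obtain p w ph where "\<bar>w\<bar> \<le> E"
    and "pv = (p, frame_vec p (horizontal_speed A E w * cos ph) (horizontal_speed A E w * sin ph) w)"
    using sphere_bundle_polar[OF assms(1)] by (metis surj_pair)
  then show "pv \<in> closure (per_lift A B \<Gamma> E)"
    using frame_vec_in_closure_per_lift[OF assms] by simp
qed

end
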